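(* For $\varepsilon>0$ let $q_\varepsilon=\frac1\varepsilon\delta(t-\frac12-2\varepsilon)$. For every $n_0\in\mathbb N$ there exists $\varepsilon_0>0$ such that $$G^a_{4n-2}(q_\varepsilon)=G^0_{4n-2}(q_\varepsilon)\ne\emptyset\quad\text{for all }(a,\varepsilon,n)\in\mathbb R\times(0,\varepsilon_0)\times\{1,\dots,n_0\}.$$
   Context: Fix an integer $N\ge1$. The potential $q_\varepsilon$ is a $\delta$-interaction of strength $1/\varepsilon$ at $t_0=\frac12+2\varepsilon\in(0,1)$. That is, $-y''+q_\varepsilon y=\lambda y$ means $-y''=\lambda y$ on $[0,1]\setminus\{t_0\}$, with $y$ continuous at $t_0$ and $y'(t_0+)-y'(t_0-)=\frac1\varepsilon y(t_0)$. Hill-equation data. For $\lambda\in\mathbb C$, let $\vartheta,\varphi$ solve this equation with $\vartheta(0)=\varphi'(0)=1$ and $\vartheta'(0)=\varphi(0)=0$. Put $F=(\varphi'(1,\cdot)+\vartheta(1,\cdot))/2$ and $F_-=(\varphi'(1,\cdot)-\vartheta(1,\cdot))/2$. Operators. Let $a=a_1'+a_2'$ with $a_1',a_2'\in\mathbb R$, let $s=e^{2\pi i/N}$, and for $k\in\mathbb Z_N$ set $c_k=\cos(\pi k/N+a)$ and $s_k=\sin(\pi k/N+a)$. $H_k^a$ acts in $L^2(\Gamma^1)$, where $\Gamma^1$ has edges $\Gamma_{n,j}$, $(n,j)\in\mathbb Z\times\{1,\dots,6\}$, each identified with $[0,1]$, by $-f''_{n,j}+q_\varepsilon f_{n,j}$,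 with boundary conditions for all $n$: - $e^{ia_1'}f_{n,1}(1)=f_{n,2}(0)=f_{n,5}(0)$; - $e^{ia_2'}f_{n,2}(1)=f_{n,3}(0)=f_{n,6}(0)$; - $e^{ia_1'}f_{n,3}(1)=f_{n,4}(0)=e^{ia_1'}f_{n-1,6}(1)$; - $e^{ia_2'}s^kf_{n,4}(1)=f_{n,1}(0)=e^{-ia_1'}f_{n-1,5}(1)$; - $e^{ia_1'}f'_{n,1}(1)=f'_{n,2}(0)+f'_{n,5}(0)$; - $e^{ia_2'}f'_{n,2}(1)=f'_{n,3}(0)+f'_{n,6}(0)$; - $e^{ia_1'}f'_{n,3}(1)+e^{ia_1'}f'_{n-1,6}(1)=f'_{n,4}(0)$; - $e^{ia_2'}s^kf'_{n,4}(1)+e^{-ia_1'}f'_{n-1,5}(1)=f'_{n,1}(0)$. $H^a=\bigoplus_kH_k^a$. Lyapunov functions. $F_{k,\nu}=\xi_k-(-1)^\nu\sqrt{\rho_k}$, with $\xi_k=\frac{9F^2-F_-^2-1}2-s_k^2$ and $\rho_k=(9F^2-s_k^2)c_k^2+s_k^2F_-^2$. Set $D_k^\pm=4(F_{k,1}\mp1)(F_{k,2}\mp1)$. Antiperiodic eigenvalues. The zeros of $D_0^-$ at $a=0$ are labeled $\lambda^{0,-}_{2,1}\le\lambda^{0,-}_{1,1}\le\lambda^{0,+}_{1,1}\le\lambda^{0,+}_{2,1}\le\lambda^{0,-}_{2,3}\le\cdots$. Set $\varkappa_n=(\lambda^{0,-}_{1,2n-1},\lambda^{0,+}_{1,2n-1})$.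 Let $r^\mp_{k,n}$ be the smallest/largest zero of $\rho_k$ in $\overline{\varkappa_n}$, and $v_k=|F_-|-c_k^2$. Gaps. $E^{k,\pm}_{1,2n-1}=\lambda^{0,\pm}_{1,2n-1}$ if $v_k(\lambda^{0,\pm}_{1,2n-1})\ge0$, and $E^{k,\pm}_{1,2n-1}=r^\pm_{k,n}$ otherwise. Define $G^a_{4n-2}=\bigcap_{k\in\mathbb Z_N}(E^{k,-}_{1,2n-1},E^{k,+}_{1,2n-1})$, the gaps of $\sigma_{ac}(H^a)$ inside $\varkappa_n$. The notation $G^a_{4n-2}(q_\varepsilon)$ indicates the potential used. *)

theory Defs
  imports "HOL-Analysis.Analysis"
begin

text \<open>cosine-type and sine-type solutions c(lambda,t), s(lambda,t) of -y''=lambda y with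
  c(0)=1, c'(0)=0, s(0)=0, s'(0)=1; c' = -lambda s and s' = c.\<close>

definition cfun :: "real \<Rightarrow> real \<Rightarrow> real" where
  "cfun lam t = (if lam \<ge> 0 then cos (sqrt lam * t) else cosh (sqrt (- lam) * t))"

definition sfun :: "real \<Rightarrow> real \<Rightarrow> real" where
  "sfun lam t = (if lam = 0 then t
     else if lam > 0 then sin (sqrt lam * t) / sqrt lam
     else sinh (sqrt (- lam) * t) / sqrt (- lam))"

definition t0 :: "real \<Rightarrow> real" where
  "t0 eps = 1/2 + 2 * eps"

text \<open>Transfer matrix over [0,1]: M(1-t0) * J * M(t0), where M(t) = [[c,s],[-lambda s, c]]
  acts on (y,y') and J = [[1,0],[1/eps,1]] is the jump y'(t0+) - y'(t0-) = (1/eps) y(t0).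
  theta1 = vartheta(1,lambda) is its (1,1) entry, dphi1 = varphi'(1,lambda) its (2,2) entry.\<close>

definition theta1 :: "real \<Rightarrow> real \<Rightarrow> real" where
  "theta1 eps lam =
     (let c1 = cfun lam (t0 eps); s1 = sfun lam (t0 eps);
          c2 = cfun lam (1 - t0 eps); s2 = sfun lam (1 - t0 eps)
      in c2 * c1 + s2 * ((1/eps) * c1 - lam * s1))"

definition dphi1 :: "real \<Rightarrow> real \<Rightarrow> real" where
  "dphi1 eps lam =
     (let c1 = cfun lam (t0 eps); s1 = sfun lam (t0 eps);
          c2 = cfun lam (1 - t0 eps); s2 = sfun lam (1 - t0 eps)
      in - lam * s2 * s1 + c2 * ((1/eps) * s1 + c1))"

definition Fp :: "real \<Rightarrow> real \<Rightarrow> real" where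
  "Fp eps lam = (dphi1 eps lam + theta1 eps lam) / 2"

definition Fm :: "real \<Rightarrow> real \<Rightarrow> real" where
  "Fm eps lam = (dphi1 eps lam - theta1 eps lam) / 2"

definition ck :: "nat \<Rightarrow> real \<Rightarrow> nat \<Rightarrow> real" where
  "ck N a k = cos (pi * real k / real N + a)"

definition sk :: "nat \<Rightarrow> real \<Rightarrow> nat \<Rightarrow> real" where
  "sk N a k = sin (pi * real k / real N + a)"

definition xi :: "nat \<Rightarrow> real \<Rightarrow> real \<Rightarrow> nat \<Rightarrow> real \<Rightarrow> real" where
  "xi N a eps k lam = (9 * (Fp eps lam)^2 - (Fm eps lam)^2 - 1) / 2 - (sk N a k)^2"

definition rho :: "nat \<Rightarrow> real \<Rightarrow> real \<Rightarrow> nat \<Rightarrow> real \<Rightarrow> real" where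
  "rho N a eps k lam = (9 * (Fp eps lam)^2 - (sk N a k)^2) * (ck N a k)^2
                     + (sk N a k)^2 * (Fm eps lam)^2"

text \<open>D_k^- = 4 (F_{k,1}+1)(F_{k,2}+1) with F_{k,nu} = xi_k - (-1)^nu sqrt rho_k;
  the product is written out: (xi+1+sqrt rho)(xi+1-sqrt rho) = (xi+1)^2 - rho.\<close>

definition Dminus :: "nat \<Rightarrow> real \<Rightarrow> real \<Rightarrow> nat \<Rightarrow> real \<Rightarrow> real" where
  "Dminus N a eps k lam = 4 * ((xi N a eps k lam + 1)^2 - rho N a eps k lam)"

definition vk :: "nat \<Rightarrow> real \<Rightarrow> real \<Rightarrow> nat \<Rightarrow> real \<Rightarrow> real" where
  "vk N a eps k lam = \<bar>Fm eps lam\<bar> - (ck N a k)^2"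

definition zero_mult :: "(real \<Rightarrow> real) \<Rightarrow> real \<Rightarrow> nat" where
  "zero_mult f x = (LEAST m. (deriv ^^ m) f x \<noteq> 0)"

definition zero_count :: "(real \<Rightarrow> real) \<Rightarrow> real \<Rightarrow> nat" where
  "zero_count f x = (\<Sum>y\<in>{y. y \<le> x \<and> f y = 0}. zero_mult f y)"

text \<open>The j-th (j \<ge> 1) zero of f in increasing order, counted with multiplicity.\<close>
definition kth_zero :: "(real \<Rightarrow> real) \<Rightarrow> nat \<Rightarrow> real" where
  "kth_zero f j = Inf {x. zero_count f x \<ge> j}"

definition lam_minus :: "nat \<Rightarrow> real \<Rightarrow> nat \<Rightarrow> real" where
  "lam_minus N eps n = kth_zero (Dminus N 0 eps 0) (4 * n - 2)"

definition lam_plus :: "nat \<Rightarrow> real \<Rightarrow> nat \<Rightarrow> real" where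
  "lam_plus N eps n = kth_zero (Dminus N 0 eps 0) (4 * n - 1)"

definition r_minus :: "nat \<Rightarrow> real \<Rightarrow> real \<Rightarrow> nat \<Rightarrow> nat \<Rightarrow> real" where
  "r_minus N a eps k n =
     Inf {x. lam_minus N eps n \<le> x \<and> x \<le> lam_plus N eps n \<and> rho N a eps k x = 0}"

definition r_plus :: "nat \<Rightarrow> real \<Rightarrow> real \<Rightarrow> nat \<Rightarrow> nat \<Rightarrow> real" where
  "r_plus N a eps k n =
     Sup {x. lam_minus N eps n \<le> x \<and> x \<le> lam_plus N eps n \<and> rho N a eps k x = 0}"

definition E_minus :: "nat \<Rightarrow> real \<Rightarrow> real \<Rightarrow> nat \<Rightarrow> nat \<Rightarrow> real" where
  "E_minus N a eps k n =
     (if vk N a eps k (lam_minus N eps n) \<ge> 0 then lam_minus N eps n else r_minus N a eps k n)"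

definition E_plus :: "nat \<Rightarrow> real \<Rightarrow> real \<Rightarrow> nat \<Rightarrow> nat \<Rightarrow> real" where
  "E_plus N a eps k n =
     (if vk N a eps k (lam_plus N eps n) \<ge> 0 then lam_plus N eps n else r_plus N a eps k n)"

definition gap :: "nat \<Rightarrow> real \<Rightarrow> real \<Rightarrow> nat \<Rightarrow> real set" where
  "gap N a eps n = (\<Inter>k\<in>{0..<N}. {E_minus N a eps k n <..< E_plus N a eps k n})"

end

theory Submission
  imports Defs
begin

text \<open>For \<open>\<lambda> = \<mu>\<^sup>2 > 0\<close> the delta interaction gives \<open>F = cos \<mu> + sin \<mu> / (2\<epsilon>\<mu>)\<close> and
  \<open>F_- = sin (4\<epsilon>\<mu>) / (2\<epsilon>\<mu>)\<close>. At \<open>a = 0\<close>, \<open>k = 0\<close> the function \<open>D_0^-\<close> splits into the four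
  factors \<open>3F + a + b F_-\<close> with \<open>a, b = \<plusminus>1\<close>, and \<open>2\<epsilon>\<mu> (3F + a + b F_-) = 3 sin \<mu> + O(\<epsilon>\<mu>)\<close>.
  Hence, for \<open>\<epsilon>\<close> small compared with \<open>1/n\<^sub>0\<close>, on \<open>\<mu> \<le> n\<^sub>0\<pi> + \<pi>/6\<close> each factor has exactly one
  zero near every \<open>m\<pi>\<close> and none elsewhere, these zeros are simple and distinct, and \<open>D_0^-\<close> has
  no zeros \<open>\<lambda> \<le> 0\<close>. At the zero of \<open>F\<close> near \<open>n\<pi>\<close> the factors equal \<open>2\<epsilon>\<mu> (a + b F_-)\<close> with
  \<open>F_- > 1\<close>, so only the two factors with \<open>b = (-1)^n\<close> have already passed their \<open>n\<close>-th zero: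
  the \<open>(4n-2)\<close>-th and \<open>(4n-1)\<close>-th zeros of \<open>D_0^-\<close> lie on either side of it. Finally
  \<open>|F_-| \<ge> 1 \<ge> c_k\<^sup>2\<close> on the whole range, so \<open>v_k \<ge> 0\<close> at both eigenvalues, and the gap is
  the open interval between them, whatever \<open>a\<close> is.\<close>

section \<open>Monodromy data of the delta interaction\<close>

lemma Fp_Fm_pos:
  assumes "0 < lam" "eps \<noteq> 0"
  shows "Fp eps lam = cos (sqrt lam) + sin (sqrt lam) / (2 * eps * sqrt lam)"
    and "Fm eps lam = sin (4 * eps * sqrt lam) / (2 * eps * sqrt lam)"
proof -
  define m where "m = sqrt lam"
  have m: "m > 0" "lam = m^2" using assms by (auto simp: m_def)
  define al where "al = m * t0 eps"
  define be where "be = m * (1 - t0 eps)"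
  have ab: "al + be = m" "al - be = 4 * eps * m" by (auto simp: al_def be_def t0_def algebra_simps)
  have cf: "cfun lam (t0 eps) = cos al" "cfun lam (1 - t0 eps) = cos be"
    "sfun lam (t0 eps) = sin al / m" "sfun lam (1 - t0 eps) = sin be / m"
    using assms unfolding cfun_def sfun_def al_def be_def m_def by auto
  have th: "theta1 eps lam = cos be * cos al - sin be * sin al + sin be * cos al / (eps * m)"
    unfolding theta1_def Let_def cf using m assms by (simp add: field_simps power2_eq_square)
  have dp: "dphi1 eps lam = cos be * cos al - sin be * sin al + cos be * sin al / (eps * m)"
    unfolding dphi1_def Let_def cf using m assms by (simp add: field_simps power2_eq_square)
  have c: "cos m = cos be * cos al - sin be * sin al"
    using cos_add[of be al] ab by (simp add: add.commute)
  have s1: "sin m = sin be * cos al + cos be * sin al"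
    using sin_add[of be al] ab by (simp add: add.commute algebra_simps)
  have s2: "sin (4 * eps * m) = sin al * cos be - cos al * sin be"
    using sin_diff[of al be] ab by simp
  show "Fp eps lam = cos (sqrt lam) + sin (sqrt lam) / (2 * eps * sqrt lam)"
    unfolding Fp_def th dp m_def[symmetric] c s1 using m assms by (simp add: field_simps)
  show "Fm eps lam = sin (4 * eps * sqrt lam) / (2 * eps * sqrt lam)"
    unfolding Fm_def th dp m_def[symmetric] s2 using m assms by (simp add: field_simps)
qed

lemma Fp_Fm_neg:
  assumes "lam < 0" "eps \<noteq> 0"
  shows "Fp eps lam = cosh (sqrt (-lam)) + sinh (sqrt (-lam)) / (2 * eps * sqrt (-lam))"
    and "Fm eps lam = sinh (4 * eps * sqrt (-lam)) / (2 * eps * sqrt (-lam))"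
proof -
  define m where "m = sqrt (-lam)"
  have m: "m > 0" "lam = -(m^2)" using assms by (auto simp: m_def)
  define al where "al = m * t0 eps"
  define be where "be = m * (1 - t0 eps)"
  have ab: "al + be = m" "al - be = 4 * eps * m" by (auto simp: al_def be_def t0_def algebra_simps)
  have cf: "cfun lam (t0 eps) = cosh al" "cfun lam (1 - t0 eps) = cosh be"
    "sfun lam (t0 eps) = sinh al / m" "sfun lam (1 - t0 eps) = sinh be / m"
    using assms unfolding cfun_def sfun_def al_def be_def m_def by auto
  have th: "theta1 eps lam = cosh be * cosh al + sinh be * sinh al + sinh be * cosh al / (eps * m)"
    unfolding theta1_def Let_def cf using m assms by (simp add: field_simps power2_eq_square)
  have dp: "dphi1 eps lam = cosh be * cosh al + sinh be * sinh al + cosh be * sinh al / (eps * m)"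
    unfolding dphi1_def Let_def cf using m assms by (simp add: field_simps power2_eq_square)
  have c: "cosh m = cosh be * cosh al + sinh be * sinh al"
    using cosh_add[of be al] ab by (simp add: add.commute)
  have s1: "sinh m = sinh be * cosh al + cosh be * sinh al"
    using sinh_add[of be al] ab by (simp add: add.commute algebra_simps)
  have s2: "sinh (4 * eps * m) = sinh al * cosh be - cosh al * sinh be"
    using sinh_add[of al "-be"] ab by simp
  show "Fp eps lam = cosh (sqrt (-lam)) + sinh (sqrt (-lam)) / (2 * eps * sqrt (-lam))"
    unfolding Fp_def th dp m_def[symmetric] c s1 using m assms by (simp add: field_simps)
  show "Fm eps lam = sinh (4 * eps * sqrt (-lam)) / (2 * eps * sqrt (-lam))"
    unfolding Fm_def th dp m_def[symmetric] s2 using m assms by (simp add: field_simps)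
qed

lemma Fp_Fm_zero:
  assumes "eps \<noteq> 0"
  shows "Fp eps 0 = 1 + 1 / (2 * eps)" and "Fm eps 0 = 2"
  using assms unfolding Fp_def Fm_def theta1_def dphi1_def cfun_def sfun_def t0_def Let_def
  by (simp_all add: field_simps)

definition signs :: "(real \<times> real) set" where
  "signs = {-1, 1} \<times> {-1, 1}"

definition Dfactor :: "real \<Rightarrow> real \<times> real \<Rightarrow> real \<Rightarrow> real" where
  "Dfactor eps p lam = 3 * Fp eps lam + fst p + snd p * Fm eps lam"

lemma finite_signs [simp]: "finite signs"
  by (simp add: signs_def)

lemma card_signs: "card signs = 4"
  by (simp add: signs_def card_cartesian_product)

lemma card_signs_Un_half:
  assumes "1 \<le> n"
  shows "card (signs \<times> {1..<n} \<union> {p \<in> signs. snd p = (-1)^n} \<times> {n}) = 4 * n - 2"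
proof -
  have "{p \<in> signs. snd p = (-1)^n} = {(-1, (-1)^n), (1, (-1)^n)}"
    unfolding signs_def by (cases "even n") auto
  then have half: "card {p \<in> signs. snd p = (-1)^n} = 2"
    by simp
  have "card (signs \<times> {1..<n} \<union> {p \<in> signs. snd p = (-1)^n} \<times> {n})
      = card (signs \<times> {1..<n}) + card ({p \<in> signs. snd p = (-1)^n} \<times> {n})"
    by (rule card_Un_disjoint) auto
  also have "\<dots> = 4 * (n - 1) + 2"
    by (simp add: half card_cartesian_product card_signs)
  also have "\<dots> = 4 * n - 2" using assms by simp
  finally show ?thesis .
qed

lemma Dminus_eq_prod_Dfactor: "Dminus N 0 eps 0 lam = (\<Prod>p\<in>signs. Dfactor eps p lam)"
proof -
  have "4 * (((9 * F^2 - G^2 - 1) / 2 - 0 + 1)^2 - ((9 * F^2 - 0) * 1 + 0 * G^2))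
     = (3 * F - 1 - G) * (3 * F - 1 + G) * (3 * F + 1 - G) * (3 * F + 1 + G)"
    for F G :: real
    by (simp add: field_simps power2_eq_square)
  then have factored: "Dminus N 0 eps 0 lam = (3 * Fp eps lam - 1 - Fm eps lam) * (3 * Fp eps lam - 1 + Fm eps lam)
     * (3 * Fp eps lam + 1 - Fm eps lam) * (3 * Fp eps lam + 1 + Fm eps lam)"
    unfolding Dminus_def xi_def rho_def ck_def sk_def by simp
  have signs_eq: "signs = {(-1, -1), (-1, 1), (1, -1), (1, 1)}"
    by (auto simp: signs_def)
  show ?thesis
    unfolding factored signs_eq Dfactor_def by (simp add: algebra_simps)
qed

lemma sin_gt_half_self:
  fixes x :: real
  assumes "0 < x" "x \<le> 1"
  shows "x / 2 < sin x"
proof -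
  have "(\<lambda>t. sin t - t/2) 0 < (\<lambda>t. sin t - t/2) x"
  proof (rule DERIV_pos_imp_increasing[OF assms(1)])
    fix t :: real assume t: "0 \<le> t" "t \<le> x"
    have "cos (pi/3) < cos t"
      using t assms pi_gt3 by (subst cos_mono_less_eq) auto
    then have "1/2 < cos t" by (simp add: cos_60)
    moreover have "DERIV (\<lambda>t. sin t - t/2) t :> cos t - 1/2"
      by (auto intro!: derivative_eq_intros)
    ultimately show "\<exists>y. DERIV (\<lambda>t. sin t - t/2) t :> y \<and> 0 < y" by force
  qed
  then show ?thesis by simp
qed

lemma sin_nat_pi_add: "sin (real m * pi + t) = (-1)^m * sin t"
  by (simp add: sin_add)

lemma cos_nat_pi_add: "cos (real m * pi + t) = (-1)^m * cos t"
  by (simp add: cos_add)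

lemma neg_one_power_mult_sin_nat_pi_add: "(-1)^m * sin (real m * pi + t) = sin t"
proof -
  have "(-1::real)^m * (-1)^m = 1" by (simp flip: power_mult_distrib)
  then show ?thesis unfolding sin_nat_pi_add mult.assoc[symmetric] by simp
qed

lemma sin_ge_half:
  fixes t :: real
  assumes "pi/6 \<le> t" "t \<le> 5*pi/6"
  shows "1/2 \<le> sin t"
proof (cases "t \<le> pi/2")
  case True
  then have "sin (pi/6) \<le> sin t" using assms by (subst sin_mono_le_eq) auto
  then show ?thesis by (simp add: sin_30)
next
  case False
  have "sin (pi/6) \<le> sin (pi - t)" using assms False by (subst sin_mono_le_eq) auto
  then show ?thesis by (simp add: sin_30)
qed

lemma abs_sin_ge_half_off_multiples:
  fixes x :: real
  assumes "pi/6 \<le> x" "\<And>m::nat. 1 \<le> m \<Longrightarrow> pi/6 < \<bar>x - real m * pi\<bar>"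
  shows "1/2 \<le> \<bar>sin x\<bar>"
proof -
  define k where "k = nat \<lfloor>x / pi\<rfloor>"
  have "0 \<le> x" using assms(1) pi_gt_zero by linarith
  then have "0 \<le> x / pi" by simp
  then have k: "real k \<le> x / pi" "x / pi < real k + 1"
    unfolding k_def by linarith+
  define t where "t = x - real k * pi"
  have t: "0 \<le> t" "t < pi" using k unfolding t_def by (auto simp: field_simps)
  have "pi/6 \<le> t"
  proof (cases "k = 0")
    case True
    then show ?thesis using assms(1) by (simp add: t_def)
  next
    case False
    then show ?thesis using assms(2)[of k] t unfolding t_def by simp
  qed
  moreover have "t \<le> 5*pi/6"
    using assms(2)[of "k+1"] t unfolding t_def by (simp add: algebra_simps)
  moreover have "\<bar>sin x\<bar> = \<bar>sin t\<bar>"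
    using sin_nat_pi_add[of k t] by (simp add: t_def abs_mult)
  ultimately show ?thesis using sin_ge_half[of t] abs_ge_self[of "sin t"] by linarith
qed

lemma cos_ge_near_multiple:
  fixes x :: real
  assumes "\<bar>x - real m * pi\<bar> \<le> pi/6"
  shows "sqrt 3 / 2 \<le> (-1)^m * cos x"
proof -
  define t where "t = x - real m * pi"
  have "(-1)^m * cos x = cos \<bar>t\<bar>"
    using cos_nat_pi_add[of m t] by (simp add: t_def flip: power_mult_distrib)
  moreover have "\<bar>t\<bar> \<le> pi/6" "0 < pi" using assms pi_gt_zero unfolding t_def by simp_all
  then have "cos (pi/6) \<le> cos \<bar>t\<bar>" by (subst cos_mono_le_eq) auto
  ultimately show ?thesis by (simp add: cos_30)
qed

lemma zero_mult_eq_1: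
  assumes "f y = 0" "(f has_real_derivative d) (at y)" "d \<noteq> 0"
  shows "zero_mult f y = 1"
  unfolding zero_mult_def
proof (rule Least_equality)
  show "(deriv ^^ 1) f y \<noteq> 0" using DERIV_imp_deriv[OF assms(2)] assms(3) by simp
  show "1 \<le> k" if "(deriv ^^ k) f y \<noteq> 0" for k
    using that assms(1) by (cases k) auto
qed

lemma has_field_derivative_prod_at_zero_factor:
  assumes "finite P" "p0 \<in> P" "g p0 z = 0"
    and "\<And>p. p \<in> P \<Longrightarrow> (g p has_field_derivative g' p) (at z)"
  shows "((\<lambda>x. \<Prod>p\<in>P. g p x) has_field_derivative g' p0 * (\<Prod>q\<in>P - {p0}. g q z)) (at z)"
proof -
  have "(\<Prod>q\<in>P - {p}. g q z) = 0" if "p \<in> P - {p0}" for p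
    using that assms(1-3) by (intro prod_zero) auto
  then have "(\<Sum>p\<in>P - {p0}. g' p * (\<Prod>q\<in>P - {p}. g q z)) = 0"
    by (intro sum.neutral) simp
  then have "(\<Sum>p\<in>P. g' p * (\<Prod>q\<in>P - {p}. g q z)) = g' p0 * (\<Prod>q\<in>P - {p0}. g q z)"
    using sum.remove[OF assms(1,2), of "\<lambda>p. g' p * (\<Prod>q\<in>P - {p}. g q z)"] by simp
  then show ?thesis
    using has_field_derivative_prod[of P g g' z] assms(4) by simp
qed

lemma kth_zero_le:
  assumes "j \<le> zero_count f x" "bdd_below {x. j \<le> zero_count f x}"
  shows "kth_zero f j \<le> x"
  unfolding kth_zero_def using assms by (intro cInf_lower) auto

lemma kth_zero_ge:
  assumes "j \<le> zero_count f x" "\<And>y. j \<le> zero_count f y \<Longrightarrow> b \<le> y"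
  shows "b \<le> kth_zero f j"
  unfolding kth_zero_def using assms by (intro cInf_greatest) auto

lemma unique_zero_if_strict_mono_on:
  fixes g :: "real \<Rightarrow> real"
  assumes "l \<le> r" "continuous_on {l..r} g" "strict_mono_on {l..r} g" "g l \<le> 0" "0 \<le> g r"
  shows "\<exists>!z. z \<in> {l..r} \<and> g z = 0"
proof -
  obtain z where "z \<in> {l..r}" "g z = 0"
    using IVT'[of g l 0 r] assms by auto
  moreover have "y = z" if "y \<in> {l..r}" "g y = 0" for y
    using strict_mono_on_eq[OF assms(3) that(1) \<open>z \<in> {l..r}\<close>] that \<open>g z = 0\<close> by simp
  ultimately show ?thesis by blast
qed

section \<open>The windows around the multiples of \<open>\<pi>\<close>\<close>

definition window :: "nat \<Rightarrow> real set" where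
  "window m = {real m * pi - pi/6 .. real m * pi + pi/6}"

lemma mem_window_iff: "t \<in> window m \<longleftrightarrow> \<bar>t - real m * pi\<bar> \<le> pi/6"
  unfolding window_def atLeastAtMost_iff abs_le_iff by argo

lemma window_less:
  assumes "m < m'" "s \<in> window m" "t \<in> window m'"
  shows "s < t"
proof -
  have "real m + 1 \<le> real m'" using assms(1) by simp
  then have "real m * pi + pi \<le> real m' * pi"
    using mult_right_mono[of "real m + 1" "real m'" pi] by (simp add: algebra_simps)
  moreover have "s \<le> real m * pi + pi/6" "real m' * pi - pi/6 \<le> t"
    using assms(2,3) unfolding window_def by auto
  ultimately show ?thesis using pi_gt_zero by linarith
qed

lemma window_disjoint: "t \<in> window m \<Longrightarrow> t \<in> window m' \<Longrightarrow> m = m'"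
  using window_less[of m m' t t] window_less[of m' m t t] by (cases m m' rule: linorder_cases) auto

text \<open>\<open>scaled_F eps \<mu> = 2\<epsilon>\<mu> F(\<mu>\<^sup>2)\<close>; its zero in the \<open>n\<close>-th window separates the \<open>(4n-2)\<close>-th from
  the \<open>(4n-1)\<close>-th zero of \<open>D_0^-\<close>.\<close>

definition scaled_F :: "real \<Rightarrow> real \<Rightarrow> real" where
  "scaled_F eps x = 2 * eps * x * cos x + sin x"

definition kappa :: "real \<Rightarrow> real \<times> real \<Rightarrow> real \<Rightarrow> real" where
  "kappa eps p x = 3 * scaled_F eps x + 2 * fst p * eps * x + snd p * sin (4 * eps * x)"

definition kappa' :: "real \<Rightarrow> real \<times> real \<Rightarrow> real \<Rightarrow> real" where
  "kappa' eps p x = 3 * (2 * eps * cos x - 2 * eps * x * sin x + cos x) + 2 * fst p * eps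
     + 4 * snd p * eps * cos (4 * eps * x)"

lemma kappa_has_derivative: "(kappa eps p has_real_derivative kappa' eps p x) (at x)"
  unfolding kappa_def kappa'_def scaled_F_def
  by (auto intro!: derivative_eq_intros simp: algebra_simps)

lemma continuous_on_kappa: "continuous_on S (kappa eps p)"
  unfolding kappa_def scaled_F_def by (intro continuous_intros)

lemma Dfactor_eq_kappa:
  assumes "0 < lam" "eps \<noteq> 0"
  shows "Dfactor eps p lam = kappa eps p (sqrt lam) / (2 * eps * sqrt lam)"
  unfolding Dfactor_def Fp_Fm_pos[OF assms] kappa_def scaled_F_def
  using assms by (simp add: field_simps)

lemma Dfactor_has_derivative:
  assumes "0 < y" "eps \<noteq> 0"
  shows "(Dfactor eps p has_real_derivative
           (kappa' eps p (sqrt y) - kappa eps p (sqrt y) / sqrt y) / (4 * eps * y)) (at y)"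
proof -
  have "((\<lambda>l. kappa eps p (sqrt l) / (2 * eps * sqrt l)) has_real_derivative
      (kappa' eps p (sqrt y) * (inverse (sqrt y) / 2) * (2 * eps * sqrt y)
        - kappa eps p (sqrt y) * (2 * eps * (inverse (sqrt y) / 2)))
      / (2 * eps * sqrt y * (2 * eps * sqrt y))) (at y)" (is "(?f has_real_derivative ?d) _")
    using assms
    by (intro DERIV_divide DERIV_chain2[OF kappa_has_derivative] DERIV_cmult DERIV_real_sqrt) auto
  moreover have "?d = (kappa' eps p (sqrt y) - kappa eps p (sqrt y) / sqrt y) / (4 * eps * y)"
  proof -
    define s where "s = sqrt y"
    have s: "0 < s" "y = s^2" using assms by (simp_all add: s_def)
    have "(k' * (inverse s / 2) * (2 * eps * s) - k * (2 * eps * (inverse s / 2)))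
        / (2 * eps * s * (2 * eps * s)) = (k' - k / s) / (4 * eps * s^2)" for k k' :: real
      using s(1) assms(2) by (simp add: field_simps power2_eq_square)
    then show ?thesis unfolding s_def[symmetric] s(2)[symmetric] .
  qed
  ultimately have "(?f has_real_derivative
      (kappa' eps p (sqrt y) - kappa eps p (sqrt y) / sqrt y) / (4 * eps * y)) (at y)"
    by simp
  then show ?thesis
    by (rule has_field_derivative_transform_within_open[where S = "{0<..}"])
       (use assms in \<open>auto simp: Dfactor_eq_kappa\<close>)
qed

section \<open>Small coupling \<open>\<epsilon>\<close>\<close>

locale small_eps =
  fixes n0 :: nat and eps :: real
  assumes eps_pos: "0 < eps" and eps_small: "eps * (32 * (real n0 + 1)) < 1"
begin

definition mu_max :: real where
  "mu_max = real n0 * pi + pi/6"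

lemma eps_mult_lt_one:
  assumes "0 \<le> x" "x \<le> mu_max"
  shows "eps * x * 8 < 1"
proof -
  have "real n0 * pi \<le> real n0 * 4" using pi_less_4 by (intro mult_left_mono) auto
  then have "x \<le> 4 * (real n0 + 1)" using pi_less_4 assms(2) unfolding mu_max_def by simp
  then have "eps * x * 8 \<le> eps * (32 * (real n0 + 1))" using eps_pos by simp
  then show ?thesis using eps_small by linarith
qed

lemma eps_lt: "eps < 1/32"
proof -
  have "eps * 32 \<le> eps * (32 * (real n0 + 1))" using eps_pos by (intro mult_left_mono) auto
  then show ?thesis using eps_small by linarith
qed

lemma window_bounds:
  assumes "m \<in> {1..n0}" "t \<in> window m"
  shows "0 < t" "t \<le> mu_max" "\<bar>t - real m * pi\<bar> \<le> pi/6"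
proof -
  show t: "\<bar>t - real m * pi\<bar> \<le> pi/6" using assms(2) by (simp add: mem_window_iff)
  have "pi \<le> real m * pi" "real m * pi \<le> real n0 * pi"
    using assms(1) by (auto intro: mult_right_mono)
  then show "0 < t" "t \<le> mu_max"
    using t pi_gt_zero unfolding mu_max_def abs_le_iff by linarith+
qed

lemma kappa_near_3sin:
  assumes "p \<in> signs" "0 \<le> x"
  shows "\<bar>kappa eps p x - 3 * sin x\<bar> \<le> 12 * eps * x"
proof -
  have "kappa eps p x - 3 * sin x = 6 * eps * x * cos x + 2 * fst p * eps * x + snd p * sin (4 * eps * x)"
    by (simp add: kappa_def scaled_F_def)
  moreover have "\<bar>6 * eps * x * cos x\<bar> \<le> 6 * eps * x"
    using eps_pos assms(2) by (simp add: abs_mult mult_left_le)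
  moreover have "\<bar>2 * fst p * eps * x\<bar> = 2 * eps * x"
    using assms eps_pos by (auto simp: signs_def abs_mult)
  moreover have "\<bar>snd p * sin (4 * eps * x)\<bar> \<le> 4 * eps * x"
    using abs_sin_x_le_abs_x[of "4 * eps * x"] eps_pos assms by (auto simp: signs_def)
  ultimately show ?thesis unfolding abs_le_iff by linarith
qed

lemma two_eps_lt_sin:
  assumes "0 < x" "x \<le> mu_max"
  shows "2 * eps * x < sin (4 * eps * x)"
proof -
  have "0 < 4 * eps * x" "4 * eps * x \<le> 1"
    using eps_mult_lt_one[of x] assms eps_pos by simp_all
  then show ?thesis using sin_gt_half_self[of "4 * eps * x"] by simp
qed

lemma kappa_nonzero_off_windows:
  assumes "p \<in> signs" "0 < x" "x \<le> mu_max" "\<And>m. m \<in> {1..n0} \<Longrightarrow> x \<notin> window m"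
  shows "kappa eps p x \<noteq> 0"
proof -
  have near: "\<bar>kappa eps p x - 3 * sin x\<bar> \<le> 12 * eps * x"
    using kappa_near_3sin assms by simp
  show ?thesis
  proof (cases "x < pi/6")
    case True
    then have "x / 2 < sin x" using sin_gt_half_self assms pi_less_4 by simp
    moreover have "12 * eps * x < 3 * x / 2" using eps_lt assms by simp
    ultimately show ?thesis using near by linarith
  next
    case False
    have "1/2 \<le> \<bar>sin x\<bar>"
    proof (rule abs_sin_ge_half_off_multiples)
      show "pi/6 \<le> x" using False by simp
      fix m :: nat assume m: "1 \<le> m"
      show "pi/6 < \<bar>x - real m * pi\<bar>"
      proof (cases "m \<le> n0")
        case True
        then show ?thesis using assms(4)[of m] m by (simp add: mem_window_iff)
      next
        case False
        then have "real n0 * pi + pi \<le> real m * pi"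
          using mult_right_mono[of "real n0 + 1" "real m" pi] by (simp add: algebra_simps)
        then show ?thesis using assms(3) pi_gt_zero unfolding mu_max_def by linarith
      qed
    qed
    moreover have "eps * x * 8 < 1" using eps_mult_lt_one assms by simp
    ultimately show ?thesis using near by linarith
  qed
qed

lemma kappa_window_ends:
  assumes "p \<in> signs" "m \<in> {1..n0}"
  shows "(-1)^m * kappa eps p (real m * pi - pi/6) < 0"
    and "0 < (-1)^m * kappa eps p (real m * pi + pi/6)"
proof -
  have close: "\<exists>e. (-1)^m * kappa eps p t = 3 * ((-1)^m * sin t) + e \<and> \<bar>e\<bar> < 3/2"
    if "t \<in> window m" for t
  proof (intro exI conjI)
    define e where "e = (-1)^m * (kappa eps p t - 3 * sin t)"
    show "(-1)^m * kappa eps p t = 3 * ((-1)^m * sin t) + e" by (simp add: e_def algebra_simps)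
    note t = window_bounds[OF assms(2) that]
    have "\<bar>e\<bar> \<le> 12 * eps * t"
      using kappa_near_3sin[OF assms(1)] t by (simp add: e_def abs_mult)
    then show "\<bar>e\<bar> < 3/2" using eps_mult_lt_one[of t] t by linarith
  qed
  have "(-1)^m * sin (real m * pi - pi/6) = -1/2" "(-1)^m * sin (real m * pi + pi/6) = 1/2"
    using neg_one_power_mult_sin_nat_pi_add[of m "-(pi/6)"] neg_one_power_mult_sin_nat_pi_add[of m "pi/6"]
    by (simp_all add: sin_30)
  moreover have "real m * pi - pi/6 \<in> window m" "real m * pi + pi/6 \<in> window m"
    unfolding window_def by auto
  ultimately show "(-1)^m * kappa eps p (real m * pi - pi/6) < 0"
    and "0 < (-1)^m * kappa eps p (real m * pi + pi/6)"
    using close unfolding abs_less_iff by fastforce+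
qed

lemma kappa'_sign_in_window:
  assumes "p \<in> signs" "m \<in> {1..n0}" "t \<in> window m"
  shows "0 < (-1)^m * kappa' eps p t"
proof -
  note t = window_bounds[OF assms(2,3)]
  have "kappa' eps p t - 3 * cos t
      = 6 * eps * cos t - 6 * eps * t * sin t + 2 * fst p * eps + 4 * snd p * eps * cos (4 * eps * t)"
    by (simp add: kappa'_def algebra_simps)
  moreover have "\<bar>6 * eps * cos t\<bar> \<le> 6 * eps" "\<bar>6 * eps * t * sin t\<bar> \<le> 6 * eps * t"
    "\<bar>2 * fst p * eps\<bar> = 2 * eps" "\<bar>4 * snd p * eps * cos (4 * eps * t)\<bar> \<le> 4 * eps"
    using eps_pos t assms(1) by (auto simp: abs_mult mult_left_le signs_def)
  ultimately have "\<bar>kappa' eps p t - 3 * cos t\<bar> \<le> 12 * eps + 6 * eps * t"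
    unfolding abs_le_iff by linarith
  then have "\<bar>(-1)^m * (kappa' eps p t - 3 * cos t)\<bar> < 2"
    using eps_mult_lt_one[of t] eps_lt t by (simp add: abs_mult)
  moreover have "sqrt 3 / 2 \<le> (-1)^m * cos t" using cos_ge_near_multiple t by simp
  moreover have "5/3 < sqrt (3::real)" by (rule real_less_rsqrt) (simp add: power2_eq_square)
  moreover have "(-1)^m * kappa' eps p t = 3 * ((-1)^m * cos t) + (-1)^m * (kappa' eps p t - 3 * cos t)"
    by (simp add: algebra_simps)
  ultimately show ?thesis unfolding abs_less_iff by linarith
qed

lemma strict_mono_on_kappa_window:
  assumes "p \<in> signs" "m \<in> {1..n0}"
  shows "strict_mono_on (window m) (\<lambda>x. (-1)^m * kappa eps p x)"
proof (rule strict_mono_onI)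
  fix x y assume xy: "x \<in> window m" "y \<in> window m" "x < y"
  show "(-1)^m * kappa eps p x < (-1)^m * kappa eps p y"
  proof (rule DERIV_pos_imp_increasing[OF xy(3)])
    fix t assume "x \<le> t" "t \<le> y"
    then have "t \<in> window m" using xy unfolding window_def by auto
    then show "\<exists>d. ((\<lambda>x. (-1)^m * kappa eps p x) has_real_derivative d) (at t) \<and> 0 < d"
      using kappa'_sign_in_window[OF assms] kappa_has_derivative DERIV_cmult by blast
  qed
qed

definition root :: "real \<times> real \<Rightarrow> nat \<Rightarrow> real" where
  "root p m = (THE z. z \<in> window m \<and> kappa eps p z = 0)"

lemma ex1_zero_in_window:
  assumes "p \<in> signs" "m \<in> {1..n0}"
  shows "\<exists>!z. z \<in> window m \<and> kappa eps p z = 0"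
proof -
  have "\<exists>!z. z \<in> window m \<and> (-1)^m * kappa eps p z = 0"
    unfolding window_def
  proof (rule unique_zero_if_strict_mono_on)
    show "continuous_on {real m * pi - pi/6..real m * pi + pi/6} (\<lambda>x. (-1)^m * kappa eps p x)"
      by (intro continuous_intros continuous_on_kappa)
  qed (use strict_mono_on_kappa_window[OF assms] kappa_window_ends[OF assms] in \<open>auto simp: window_def\<close>)
  then show ?thesis by simp
qed

lemma root_in_window: "p \<in> signs \<Longrightarrow> m \<in> {1..n0} \<Longrightarrow> root p m \<in> window m"
  and kappa_root: "p \<in> signs \<Longrightarrow> m \<in> {1..n0} \<Longrightarrow> kappa eps p (root p m) = 0"
  using theI'[OF ex1_zero_in_window] unfolding root_def by blast+

lemma root_unique:
  "p \<in> signs \<Longrightarrow> m \<in> {1..n0} \<Longrightarrow> z \<in> window m \<Longrightarrow> kappa eps p z = 0 \<Longrightarrow> root p m = z"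
  unfolding root_def using the1_equality[OF ex1_zero_in_window] by blast

lemma root_le_iff:
  assumes "p \<in> signs" "m \<in> {1..n0}" "u \<in> window m"
  shows "root p m \<le> u \<longleftrightarrow> 0 \<le> (-1)^m * kappa eps p u"
  using strict_mono_on_less_eq[OF strict_mono_on_kappa_window[OF assms(1,2)] root_in_window[OF assms(1,2)] assms(3)]
    kappa_root[OF assms(1,2)] by simp

lemma root_bounds: "p \<in> signs \<Longrightarrow> m \<in> {1..n0} \<Longrightarrow> 0 < root p m \<and> root p m \<le> mu_max"
  using window_bounds root_in_window by blast

lemma kappa_eq_0_iff:
  assumes "p \<in> signs" "0 < x" "x \<le> mu_max"
  shows "kappa eps p x = 0 \<longleftrightarrow> (\<exists>m\<in>{1..n0}. x = root p m)"
proof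
  assume "kappa eps p x = 0"
  moreover obtain m where "m \<in> {1..n0}" "x \<in> window m"
    using kappa_nonzero_off_windows[OF assms] calculation by blast
  ultimately show "\<exists>m\<in>{1..n0}. x = root p m" using root_unique assms(1) by metis
next
  assume "\<exists>m\<in>{1..n0}. x = root p m"
  then show "kappa eps p x = 0" using kappa_root[OF assms(1)] by blast
qed

lemma kappa_zeros_distinct:
  assumes "p \<in> signs" "q \<in> signs" "0 < x" "x \<le> mu_max" "kappa eps p x = 0" "kappa eps q x = 0"
  shows "p = q"
proof -
  have "2 * eps * x < sin (4 * eps * x)" "0 < eps * x" using two_eps_lt_sin assms eps_pos by simp_all
  moreover have "2 * (fst p - fst q) * (eps * x) + (snd p - snd q) * sin (4 * eps * x) = 0"
    using assms(5,6) unfolding kappa_def by (simp add: algebra_simps)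
  ultimately show ?thesis using assms(1,2) unfolding signs_def by (auto simp: algebra_simps)
qed

lemma Dfactor_pos_nonpos:
  assumes "lam \<le> 0" "p \<in> signs"
  shows "0 < Dfactor eps p lam"
proof (cases "lam = 0")
  case True
  then show ?thesis
    using Fp_Fm_zero[of eps] eps_pos assms(2) unfolding Dfactor_def signs_def by (auto simp: add_pos_pos)
next
  case False
  then have "lam < 0" using assms by simp
  define r where "r = sqrt (-lam)"
  have r: "0 < r" "0 < 2 * eps * r" using \<open>lam < 0\<close> eps_pos by (simp_all add: r_def)
  have Fp: "Fp eps lam = cosh r + sinh r / (2 * eps * r)"
    and Fm: "Fm eps lam = sinh (4 * eps * r) / (2 * eps * r)"
    using Fp_Fm_neg[OF \<open>lam < 0\<close>] eps_pos by (simp_all add: r_def)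
  have sinh_pos: "0 < sinh (4 * eps * r)" using r eps_pos by simp
  have "sinh (4 * eps * r) \<le> sinh r" "0 < sinh r" using r eps_lt eps_pos by simp_all
  then have "0 < 3 * sinh r - sinh (4 * eps * r)" by linarith
  then have "0 < (3 * sinh r - sinh (4 * eps * r)) / (2 * eps * r)"
    using r(2) by (rule divide_pos_pos)
  then have "0 < 3 * cosh r - 1 + (3 * sinh r - sinh (4 * eps * r)) / (2 * eps * r)"
    using cosh_real_ge_1[of r] by linarith
  also have "\<dots> = 3 * Fp eps lam - 1 - Fm eps lam"
    unfolding Fp Fm by (simp add: diff_divide_distrib)
  also have "\<dots> \<le> Dfactor eps p lam"
    using assms(2) sinh_pos r unfolding Dfactor_def signs_def Fm by auto
  finally show ?thesis .
qed

lemma Dminus_nonzero_nonpos: "lam \<le> 0 \<Longrightarrow> Dminus N 0 eps 0 lam \<noteq> 0"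
  unfolding Dminus_eq_prod_Dfactor using Dfactor_pos_nonpos by fastforce

lemma Dminus_eq_0_iff:
  assumes "0 < lam" "sqrt lam \<le> mu_max"
  shows "Dminus N 0 eps 0 lam = 0 \<longleftrightarrow> (\<exists>p\<in>signs. \<exists>m\<in>{1..n0}. sqrt lam = root p m)"
proof -
  have "Dminus N 0 eps 0 lam = 0 \<longleftrightarrow> (\<exists>p\<in>signs. kappa eps p (sqrt lam) = 0)"
    unfolding Dminus_eq_prod_Dfactor using Dfactor_eq_kappa[OF assms(1)] eps_pos assms(1) by simp
  also have "\<dots> \<longleftrightarrow> (\<exists>p\<in>signs. \<exists>m\<in>{1..n0}. sqrt lam = root p m)"
    using kappa_eq_0_iff assms by simp
  finally show ?thesis .
qed

lemma Dminus_has_derivative_at_root: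
  assumes "p0 \<in> signs" "m \<in> {1..n0}"
  obtains d where "d \<noteq> 0" "(Dminus N 0 eps 0 has_real_derivative d) (at ((root p0 m)^2))"
proof -
  define s where "s = root p0 m"
  define y where "y = s^2"
  have s: "0 < s" "s \<le> mu_max" "sqrt y = s" "0 < y"
    using root_bounds[OF assms] unfolding s_def y_def by simp_all
  have zero: "kappa eps p0 s = 0" using kappa_root[OF assms] by (simp add: s_def)
  define d where "d = (kappa' eps p0 s - kappa eps p0 s / s) / (4 * eps * y)
                      * (\<Prod>q\<in>signs - {p0}. Dfactor eps q y)"
  have "((\<lambda>l. \<Prod>p\<in>signs. Dfactor eps p l) has_real_derivative d) (at y)"
    unfolding d_def
  proof (rule has_field_derivative_prod_at_zero_factor
      [where g' = "\<lambda>p. (kappa' eps p s - kappa eps p s / s) / (4 * eps * y)"])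
    show "Dfactor eps p0 y = 0" using Dfactor_eq_kappa[of y eps p0] s zero eps_pos by simp
    show "(Dfactor eps p has_real_derivative (kappa' eps p s - kappa eps p s / s) / (4 * eps * y)) (at y)"
      for p
      using Dfactor_has_derivative[of y eps p] s eps_pos by simp
  qed (use assms in simp_all)
  moreover have "Dminus N 0 eps 0 = (\<lambda>l. \<Prod>p\<in>signs. Dfactor eps p l)"
    using Dminus_eq_prod_Dfactor by blast
  moreover have "kappa' eps p0 s \<noteq> 0"
    using kappa'_sign_in_window[OF assms root_in_window[OF assms]] by (auto simp: s_def)
  moreover have "Dfactor eps q y \<noteq> 0" if "q \<in> signs - {p0}" for q
    using Dfactor_eq_kappa[of y eps q] kappa_zeros_distinct[of p0 q s] that assms(1) s zero eps_pos
    by auto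
  ultimately have "d \<noteq> 0" "(Dminus N 0 eps 0 has_real_derivative d) (at y)"
    using s eps_pos zero unfolding d_def by simp_all
  then show ?thesis using that unfolding y_def s_def by blast
qed

lemma zero_mult_Dminus_root:
  assumes "p \<in> signs" "m \<in> {1..n0}"
  shows "zero_mult (Dminus N 0 eps 0) ((root p m)^2) = 1"
proof -
  obtain d where "d \<noteq> 0" "(Dminus N 0 eps 0 has_real_derivative d) (at ((root p m)^2))"
    using Dminus_has_derivative_at_root[OF assms] .
  moreover have "Dminus N 0 eps 0 ((root p m)^2) = 0"
    using Dminus_eq_0_iff[of "(root p m)^2" N] root_bounds[OF assms] assms by force
  ultimately show ?thesis by (intro zero_mult_eq_1)
qed

definition roots_below :: "real \<Rightarrow> ((real \<times> real) \<times> nat) set" where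
  "roots_below u = {(p, m) \<in> signs \<times> {1..n0}. root p m \<le> u}"

lemma finite_roots_below: "finite (roots_below u)"
  by (rule finite_subset[of _ "signs \<times> {1..n0}"]) (auto simp: roots_below_def)

lemma roots_below_mono: "u \<le> v \<Longrightarrow> roots_below u \<subseteq> roots_below v"
  unfolding roots_below_def by auto

lemma inj_on_root: "inj_on (\<lambda>(p, m). root p m) (signs \<times> {1..n0})"
proof (rule inj_onI, clarify)
  fix p m q m'
  assume pm: "p \<in> signs" "m \<in> {1..n0}" "q \<in> signs" "m' \<in> {1..n0}" and eq: "root p m = root q m'"
  have "m = m'"
    using window_disjoint[OF root_in_window[OF pm(1,2)]] root_in_window[OF pm(3,4)] eq by simp
  moreover have "p = q"
    using kappa_zeros_distinct[OF pm(1,3) _ _ kappa_root[OF pm(1,2)]] root_bounds[OF pm(1,2)]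
      kappa_root[OF pm(3,4)] eq by simp
  ultimately show "p = q \<and> m = m'" by simp
qed

lemma Dminus_zeros_below_sq:
  assumes "0 \<le> u" "u \<le> mu_max"
  shows "{y. y \<le> u^2 \<and> Dminus N 0 eps 0 y = 0} = (\<lambda>(p, m). (root p m)^2) ` roots_below u"
proof (intro equalityI subsetI)
  fix y assume "y \<in> {y. y \<le> u^2 \<and> Dminus N 0 eps 0 y = 0}"
  then have y: "y \<le> u^2" "Dminus N 0 eps 0 y = 0" by simp_all
  then have "0 < y" using Dminus_nonzero_nonpos[of y N] by (meson not_le)
  have "sqrt y \<le> u" using real_le_lsqrt[OF assms(1) y(1)] .
  moreover obtain p m where pm: "p \<in> signs" "m \<in> {1..n0}" "sqrt y = root p m"
    using Dminus_eq_0_iff[of y N] y(2) \<open>0 < y\<close> \<open>sqrt y \<le> u\<close> assms by auto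
  ultimately have "(p, m) \<in> roots_below u" unfolding roots_below_def by simp
  moreover have "y = (root p m)^2" using pm(3) \<open>0 < y\<close> by (metis less_imp_le real_sqrt_pow2)
  ultimately show "y \<in> (\<lambda>(p, m). (root p m)^2) ` roots_below u"
    using rev_image_eqI[of "(p, m)" _ y "\<lambda>(p, m). (root p m)^2"] by simp
next
  fix y assume "y \<in> (\<lambda>(p, m). (root p m)^2) ` roots_below u"
  then obtain p m where pm: "p \<in> signs" "m \<in> {1..n0}" "root p m \<le> u" "y = (root p m)^2"
    unfolding roots_below_def by auto
  moreover have "0 < root p m" "root p m \<le> mu_max" using root_bounds[OF pm(1,2)] by simp_all
  then have "sqrt y = root p m" "0 < y" "y \<le> u^2" using pm by (simp_all add: power_mono)
  moreover have "\<exists>p'\<in>signs. \<exists>m'\<in>{1..n0}. sqrt y = root p' m'"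
    using pm(1,2) \<open>sqrt y = root p m\<close> by blast
  ultimately have "Dminus N 0 eps 0 y = 0"
    using Dminus_eq_0_iff[of y N] \<open>root p m \<le> mu_max\<close> by simp
  with \<open>y \<le> u^2\<close> show "y \<in> {y. y \<le> u^2 \<and> Dminus N 0 eps 0 y = 0}" by simp
qed

lemma zero_count_Dminus_sq:
  assumes "0 \<le> u" "u \<le> mu_max"
  shows "zero_count (Dminus N 0 eps 0) (u^2) = card (roots_below u)"
proof -
  have inj: "inj_on (\<lambda>(p, m). (root p m)^2) (roots_below u)"
  proof (rule inj_onI, clarify)
    fix p m q m'
    assume pm: "(p, m) \<in> roots_below u" "(q, m') \<in> roots_below u" and eq: "(root p m)^2 = (root q m')^2"
    then have "(p, m) \<in> signs \<times> {1..n0}" "(q, m') \<in> signs \<times> {1..n0}"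
      unfolding roots_below_def by simp_all
    moreover have "0 < root p m" "0 < root q m'" using root_bounds calculation by auto
    then have "root p m = root q m'" using eq by simp
    ultimately show "p = q \<and> m = m'" using inj_onD[OF inj_on_root, of "(p, m)" "(q, m')"] by auto
  qed
  have "zero_count (Dminus N 0 eps 0) (u^2)
      = (\<Sum>y\<in>(\<lambda>(p, m). (root p m)^2) ` roots_below u. zero_mult (Dminus N 0 eps 0) y)"
    unfolding zero_count_def Dminus_zeros_below_sq[OF assms] ..
  also have "\<dots> = (\<Sum>(p, m)\<in>roots_below u. zero_mult (Dminus N 0 eps 0) ((root p m)^2))"
    by (subst sum.reindex[OF inj]) (simp add: comp_def case_prod_unfold)
  also have "\<dots> = (\<Sum>(p, m)\<in>roots_below u. 1)"
    by (intro sum.cong refl) (auto simp: roots_below_def zero_mult_Dminus_root)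
  finally show ?thesis by simp
qed

lemma zero_count_Dminus_nonpos: "y \<le> 0 \<Longrightarrow> zero_count (Dminus N 0 eps 0) y = 0"
  unfolding zero_count_def using Dminus_nonzero_nonpos by (auto intro: sum.neutral)

lemma zero_count_Dminus_le:
  assumes "0 \<le> u" "u \<le> mu_max" "y \<le> u^2"
  shows "zero_count (Dminus N 0 eps 0) y \<le> card (roots_below u)"
proof (cases "y \<le> 0")
  case True
  then show ?thesis using zero_count_Dminus_nonpos by simp
next
  case False
  then have "sqrt y \<le> u" "y = (sqrt y)^2" using assms real_le_lsqrt by simp_all
  then have "zero_count (Dminus N 0 eps 0) y = card (roots_below (sqrt y))"
    using zero_count_Dminus_sq[of "sqrt y" N] assms False by simp
  also have "\<dots> \<le> card (roots_below u)"
    using \<open>sqrt y \<le> u\<close> by (rule card_mono[OF finite_roots_below roots_below_mono])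
  finally show ?thesis .
qed

lemma zero_count_Dminus_pos: "1 \<le> zero_count (Dminus N 0 eps 0) x \<Longrightarrow> 0 < x"
  using zero_count_Dminus_nonpos[of x N] by (cases "x \<le> 0") auto

lemma bdd_below_zero_count_Dminus:
  assumes "1 \<le> j"
  shows "bdd_below {x. j \<le> zero_count (Dminus N 0 eps 0) x}"
proof (rule bdd_belowI[of _ 0])
  fix x assume "x \<in> {x. j \<le> zero_count (Dminus N 0 eps 0) x}"
  then have "1 \<le> zero_count (Dminus N 0 eps 0) x" using assms by simp
  then show "0 \<le> x" using zero_count_Dminus_pos less_imp_le by blast
qed

lemma root_le_window_top_iff:
  assumes "p \<in> signs" "m \<in> {1..n0}"
  shows "root p m \<le> real n * pi + pi/6 \<longleftrightarrow> m \<le> n"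
proof
  assume "root p m \<le> real n * pi + pi/6"
  moreover have "real n * pi + pi/6 \<in> window n" by (simp add: window_def)
  ultimately show "m \<le> n"
    using window_less[of n m _ "root p m"] root_in_window[OF assms] by (meson not_le not_less)
next
  assume "m \<le> n"
  then have "real m * pi \<le> real n * pi" by (simp add: mult_right_mono)
  moreover have "root p m \<le> real m * pi + pi/6"
    using root_in_window[OF assms] unfolding window_def by simp
  ultimately show "root p m \<le> real n * pi + pi/6" by linarith
qed

lemma zero_count_Dminus_window_top:
  assumes "n \<in> {1..n0}"
  shows "zero_count (Dminus N 0 eps 0) ((real n * pi + pi/6)^2) = 4 * n"
proof -
  have "real n * pi + pi/6 \<in> window n" by (simp add: window_def)
  then have top: "0 \<le> real n * pi + pi/6" "real n * pi + pi/6 \<le> mu_max"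
    using window_bounds[OF assms] by auto
  have "roots_below (real n * pi + pi/6) = signs \<times> {1..n}"
    using root_le_window_top_iff assms unfolding roots_below_def by auto
  then show ?thesis
    using zero_count_Dminus_sq[OF top, of N] by (simp add: card_cartesian_product card_signs)
qed

lemma scaled_F_zero_in_window:
  assumes "n \<in> {1..n0}"
  obtains mu where "mu \<in> window n" "scaled_F eps mu = 0"
proof -
  define g where "g t = (-1)^n * scaled_F eps t" for t
  have small: "\<bar>(-1)^n * (2 * eps * t * cos t)\<bar> < 1/2" if "t \<in> window n" for t
  proof -
    have "\<bar>(-1)^n * (2 * eps * t * cos t)\<bar> \<le> 2 * eps * t"
      using window_bounds[OF assms that] eps_pos by (simp add: abs_mult mult_left_le)
    then show ?thesis using eps_mult_lt_one[of t] window_bounds[OF assms that] by linarith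
  qed
  have "g t = (-1)^n * sin (real n * pi + (t - real n * pi)) + (-1)^n * (2 * eps * t * cos t)" for t
    by (simp add: g_def scaled_F_def algebra_simps)
  then have g: "g t = sin (t - real n * pi) + (-1)^n * (2 * eps * t * cos t)" for t
    by (simp only: neg_one_power_mult_sin_nat_pi_add)
  have ends: "real n * pi - pi/6 \<in> window n" "real n * pi + pi/6 \<in> window n"
    by (simp_all add: window_def)
  have "g (real n * pi - pi/6) = -1/2 + (-1)^n * (2 * eps * (real n * pi - pi/6) * cos (real n * pi - pi/6))"
    "g (real n * pi + pi/6) = 1/2 + (-1)^n * (2 * eps * (real n * pi + pi/6) * cos (real n * pi + pi/6))"
    using g by (simp_all add: sin_30)
  then have "g (real n * pi - pi/6) \<le> 0" "0 \<le> g (real n * pi + pi/6)"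
    using small[OF ends(1)] small[OF ends(2)] unfolding abs_less_iff by linarith+
  moreover have "continuous_on (window n) g"
    unfolding g_def scaled_F_def by (intro continuous_intros)
  ultimately obtain mu where "mu \<in> window n" "g mu = 0"
    using IVT'[of g "real n * pi - pi/6" 0 "real n * pi + pi/6"] unfolding window_def by auto
  then show ?thesis using that by (simp add: g_def)
qed

lemma kappa_at_scaled_F_zero:
  assumes "p \<in> signs" "0 < mu" "mu \<le> mu_max" "scaled_F eps mu = 0"
  shows "0 \<le> (-1)^n * kappa eps p mu \<longleftrightarrow> snd p = (-1)^n"
    and "kappa eps p mu \<noteq> 0"
proof -
  have S: "2 * eps * mu < sin (4 * eps * mu)" "0 < eps * mu"
    using two_eps_lt_sin assms(2,3) eps_pos by simp_all
  have "kappa eps p mu = 2 * fst p * (eps * mu) + snd p * sin (4 * eps * mu)"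
    using assms(4) unfolding kappa_def by simp
  moreover have "(-1::real)^n = 1 \<or> (-1::real)^n = -1" by (cases "even n") auto
  ultimately show "0 \<le> (-1)^n * kappa eps p mu \<longleftrightarrow> snd p = (-1)^n" "kappa eps p mu \<noteq> 0"
    using assms(1) S unfolding signs_def by (auto simp: algebra_simps)
qed

lemma roots_below_scaled_F_zero:
  assumes "n \<in> {1..n0}" "mu \<in> window n" "scaled_F eps mu = 0"
  shows "roots_below mu = signs \<times> {1..<n} \<union> {p \<in> signs. snd p = (-1)^n} \<times> {n}"
proof -
  note mu = window_bounds[OF assms(1,2)]
  have "root p m \<le> mu \<longleftrightarrow> m < n \<or> (m = n \<and> snd p = (-1)^n)"
    if p: "p \<in> signs" and m: "m \<in> {1..n0}" for p m
  proof (cases m n rule: linorder_cases)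
    case less
    then show ?thesis using window_less[OF less root_in_window[OF p m] assms(2)] by simp
  next
    case equal
    then show ?thesis
      using root_le_iff[OF p m] assms(2) kappa_at_scaled_F_zero(1)[OF p mu(1,2) assms(3)] by simp
  next
    case greater
    then show ?thesis using window_less[OF greater assms(2) root_in_window[OF p m]] by simp
  qed
  then show ?thesis using assms(1) unfolding roots_below_def by auto
qed

lemma lam_plus_bounds:
  assumes "n \<in> {1..n0}" "mu \<in> window n" "scaled_F eps mu = 0"
  shows "mu^2 \<le> lam_plus N eps n" "lam_plus N eps n \<le> (real n * pi + pi/6)^2"
proof -
  have count: "4 * n - 1 \<le> zero_count (Dminus N 0 eps 0) ((real n * pi + pi/6)^2)"
    using zero_count_Dminus_window_top[OF assms(1)] by simp
  show "lam_plus N eps n \<le> (real n * pi + pi/6)^2"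
    unfolding lam_plus_def
    by (rule kth_zero_le[OF count bdd_below_zero_count_Dminus]) (use assms(1) in auto)
  show "mu^2 \<le> lam_plus N eps n"
    unfolding lam_plus_def
  proof (rule kth_zero_ge[OF count])
    fix y assume y: "4 * n - 1 \<le> zero_count (Dminus N 0 eps 0) y"
    show "mu^2 \<le> y"
    proof (rule ccontr)
      assume "\<not> mu^2 \<le> y"
      then have "zero_count (Dminus N 0 eps 0) y \<le> card (roots_below mu)"
        using window_bounds[OF assms(1,2)] by (intro zero_count_Dminus_le) auto
      also have "\<dots> = 4 * n - 2"
        using roots_below_scaled_F_zero[OF assms] card_signs_Un_half assms(1) by simp
      finally show False using y assms(1) by simp presburger
    qed
  qed
qed

lemma lam_minus_bounds:
  assumes "n \<in> {1..n0}" "mu \<in> window n" "scaled_F eps mu = 0"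
  shows "0 \<le> lam_minus N eps n" "lam_minus N eps n < mu^2"
proof -
  note mu = window_bounds[OF assms(1,2)]
  have card: "card (roots_below mu) = 4 * n - 2"
    using roots_below_scaled_F_zero[OF assms] card_signs_Un_half assms(1) by simp
  define R where "R = (\<lambda>(p, m). root p m) ` roots_below mu"
  define r where "r = Max R"
  have j: "2 \<le> 4 * n - 2" using assms(1) by simp arith
  then have "roots_below mu \<noteq> {}" using card by auto
  then have R: "finite R" "R \<noteq> {}" using finite_roots_below unfolding R_def by simp_all
  then have "r \<in> R" unfolding r_def by (rule Max_in)
  then obtain p m where pm: "(p, m) \<in> roots_below mu" "r = root p m" unfolding R_def by auto
  then have pm': "p \<in> signs" "m \<in> {1..n0}" "root p m \<le> mu" unfolding roots_below_def by auto
  have "root p m \<noteq> mu"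
    using kappa_root[OF pm'(1,2)] kappa_at_scaled_F_zero(2)[OF pm'(1) mu(1,2) assms(3)] by auto
  then have r: "0 < r" "r < mu" using pm(2) pm' root_bounds by auto
  have "roots_below r = roots_below mu"
  proof
    show "roots_below r \<subseteq> roots_below mu" using r by (intro roots_below_mono) simp
    show "roots_below mu \<subseteq> roots_below r"
    proof
      fix x assume x: "x \<in> roots_below mu"
      then have "(case x of (p, m) \<Rightarrow> root p m) \<le> r"
        unfolding r_def R_def using Max_ge[OF R(1)] R_def by blast
      then show "x \<in> roots_below r" using x unfolding roots_below_def by auto
    qed
  qed
  then have count: "zero_count (Dminus N 0 eps 0) (r^2) = 4 * n - 2"
    using zero_count_Dminus_sq[of r N] r mu card by simp
  have "lam_minus N eps n \<le> r^2"
    unfolding lam_minus_def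
    by (rule kth_zero_le[OF _ bdd_below_zero_count_Dminus]) (use count j in simp_all)
  also have "r^2 < mu^2" using r by (simp add: power_strict_mono)
  finally show "lam_minus N eps n < mu^2" .
  show "0 \<le> lam_minus N eps n"
    unfolding lam_minus_def
  proof (rule kth_zero_ge)
    show "4 * n - 2 \<le> zero_count (Dminus N 0 eps 0) (r^2)" using count by simp
    show "0 \<le> y" if "4 * n - 2 \<le> zero_count (Dminus N 0 eps 0) y" for y
      using zero_count_Dminus_pos[of N y] that j by simp
  qed
qed

lemma abs_Fm_ge_1:
  assumes "0 \<le> lam" "sqrt lam \<le> mu_max"
  shows "1 \<le> \<bar>Fm eps lam\<bar>"
proof (cases "lam = 0")
  case True
  then show ?thesis using Fp_Fm_zero[of eps] eps_pos by simp
next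
  case False
  then have "0 < sqrt lam" "0 < 2 * eps * sqrt lam" using assms eps_pos by simp_all
  then have "1 < sin (4 * eps * sqrt lam) / (2 * eps * sqrt lam)"
    using two_eps_lt_sin[of "sqrt lam"] assms(2) by simp
  moreover have "Fm eps lam = sin (4 * eps * sqrt lam) / (2 * eps * sqrt lam)"
    using Fp_Fm_pos(2)[of lam eps] False assms eps_pos by simp
  ultimately show ?thesis using abs_ge_self[of "Fm eps lam"] by linarith
qed

lemma antiperiodic_eigenvalues_in_range:
  assumes "n \<in> {1..n0}"
  shows "lam_minus N eps n < lam_plus N eps n"
    and "1 \<le> \<bar>Fm eps (lam_minus N eps n)\<bar>" "1 \<le> \<bar>Fm eps (lam_plus N eps n)\<bar>"
proof -
  obtain mu where mu: "mu \<in> window n" "scaled_F eps mu = 0"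
    using scaled_F_zero_in_window[OF assms] .
  note minus = lam_minus_bounds[OF assms mu, of N] and plus = lam_plus_bounds[OF assms mu, of N]
  show "lam_minus N eps n < lam_plus N eps n" using minus plus by simp
  have top: "0 \<le> real n * pi + pi/6" "real n * pi + pi/6 \<le> mu_max"
    using window_bounds[OF assms, of "real n * pi + pi/6"] by (simp_all add: window_def)
  have "0 \<le> lam_plus N eps n" using minus plus by linarith
  moreover have "sqrt (lam_plus N eps n) \<le> mu_max"
    using real_le_lsqrt[OF top(1) plus(2)] top(2) by simp
  ultimately show "1 \<le> \<bar>Fm eps (lam_plus N eps n)\<bar>" by (rule abs_Fm_ge_1)
  have "sqrt (lam_minus N eps n) \<le> sqrt (lam_plus N eps n)"
    using minus plus by simp
  then show "1 \<le> \<bar>Fm eps (lam_minus N eps n)\<bar>"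
    using abs_Fm_ge_1[OF minus(1)] \<open>sqrt (lam_plus N eps n) \<le> mu_max\<close> by linarith
qed

end

lemma gap_eq_antiperiodic_interval:
  assumes "1 \<le> N" "1 \<le> \<bar>Fm eps (lam_minus N eps n)\<bar>" "1 \<le> \<bar>Fm eps (lam_plus N eps n)\<bar>"
  shows "gap N a eps n = {lam_minus N eps n <..< lam_plus N eps n}"
proof -
  have ck: "(ck N a k)^2 \<le> 1" for k
    unfolding ck_def by (simp add: abs_square_le_1)
  have "0 \<le> vk N a eps k (lam_minus N eps n)" "0 \<le> vk N a eps k (lam_plus N eps n)" for k
    using ck[of k] assms(2,3) unfolding vk_def by linarith+
  then show ?thesis
    using assms(1) unfolding gap_def E_minus_def E_plus_def by auto
qed

theorem proposition3p5:
  fixes N :: nat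
  assumes "N \<ge> 1"
  shows "\<forall>n0::nat. \<exists>eps0>0. \<forall>a::real. \<forall>eps::real. \<forall>n::nat.
           0 < eps \<and> eps < eps0 \<and> 1 \<le> n \<and> n \<le> n0 \<longrightarrow>
             gap N a eps n = gap N 0 eps n \<and> gap N 0 eps n \<noteq> {}"
proof
  fix n0 :: nat
  define eps0 where "eps0 = 1 / (32 * (real n0 + 1))"
  have "gap N a eps n = gap N 0 eps n \<and> gap N 0 eps n \<noteq> {}"
    if "0 < eps" "eps < eps0" "1 \<le> n" "n \<le> n0" for a eps n
  proof -
    have "eps * (32 * (real n0 + 1)) < 1"
      using that(2) unfolding eps0_def by (simp add: field_simps)
    then interpret small_eps n0 eps using that(1) by unfold_locales
    have n: "n \<in> {1..n0}" using that(3,4) by simp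
    show ?thesis
      using gap_eq_antiperiodic_interval[OF assms antiperiodic_eigenvalues_in_range(2,3)[OF n]]
        antiperiodic_eigenvalues_in_range(1)[OF n, where N = N] by simp
  qed
  moreover have "0 < eps0" unfolding eps0_def by simp
  ultimately show "\<exists>eps0>0. \<forall>a::real. \<forall>eps::real. \<forall>n::nat.
           0 < eps \<and> eps < eps0 \<and> 1 \<le> n \<and> n \<le> n0 \<longrightarrow>
             gap N a eps n = gap N 0 eps n \<and> gap N 0 eps n \<noteq> {}"
    by blast
qed

end
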